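(* Let $\ell\ge 2$ and $n_1,\dots,n_\ell$ be positive integers, and let $G$ be the xor-product of the complete graphs $K_{n_1},\dots,K_{n_\ell}$. Then $\omega(G)\le n_1+\dots+n_\ell-\ell+1$.
   Context: The xor-product of graphs $G_1,\dots,G_\ell$ has vertex set $V(G_1)\times\dots\times V(G_\ell)$, two vertices $(g_1,\dots,g_\ell)$ and $(g'_1,\dots,g'_\ell)$ being adjacent iff the number of indices $i$ with $g_ig'_i\in E(G_i)$ is odd. $\omega$ denotes the clique number. *)

theory Defs
  imports Main
begin

type_synonym 'a graph = "'a set \<times> ('a \<Rightarrow> 'a \<Rightarrow> bool)"

definition verts :: "'a graph \<Rightarrow> 'a set" where "verts G = fst G"
definition adj :: "'a graph \<Rightarrow> 'a \<Rightarrow> 'a \<Rightarrow> bool" where "adj G = snd G"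

definition complete_graph :: "nat \<Rightarrow> nat graph" where
  "complete_graph n = ({0..<n}, \<lambda>x y. x \<noteq> y)"

definition xor_product :: "'a graph list \<Rightarrow> 'a list graph" where
  "xor_product Gs =
    ({v. length v = length Gs \<and> (\<forall>i<length Gs. v ! i \<in> verts (Gs ! i))},
     \<lambda>u v. odd (card {i. i < length Gs \<and> adj (Gs ! i) (u ! i) (v ! i)}))"

definition is_clique :: "'a graph \<Rightarrow> 'a set \<Rightarrow> bool" where
  "is_clique G C \<longleftrightarrow> C \<subseteq> verts G \<and> (\<forall>x\<in>C. \<forall>y\<in>C. x \<noteq> y \<longrightarrow> adj G x y)"

definition clique_number :: "'a graph \<Rightarrow> nat" where
  "clique_number G = Sup {card C | C. finite C \<and> is_clique G C}"

end

theory Submission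
  imports Defs
begin

text \<open>Vertices of the xor-product of \<open>K\<^sub>n\<^sub>1, \<dots>, K\<^sub>n\<^sub>\<ell>\<close> are words \<open>x\<close> with \<open>x\<^sub>i < n\<^sub>i\<close>,
  adjacent iff their Hamming distance is odd. Call a set \<open>T\<close> of words balanced if every value
  occurs an even number of times in every coordinate. A clique \<open>T\<close> of even size cannot be
  balanced unless it is empty: fix \<open>y \<in> T\<close> and count the coordinates in which the members of
  \<open>T\<close> agree with \<open>y\<close>. Balance makes the total even, but modulo 2 the word \<open>y\<close> contributes
  \<open>\<ell>\<close> and each of the odd number of other words contributes \<open>\<ell> + 1\<close>.

  Hence, for a clique \<open>C\<close>, sending an even-sized \<open>E \<subseteq> C\<close> to the parities of the numbers of
  occurrences of the values \<open>a \<noteq> 0\<close> in each coordinate is injective: over GF(2) this map is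
  linear in \<open>E\<close>, and a set in its kernel is balanced, the parity for the value 0 being forced
  by the even size. It maps the \<open>2\<^bsup>|C| - 1\<^esup>\<close> even subsets of \<open>C\<close> into the subsets of a set of
  size \<open>\<Sum>(n\<^sub>i - 1)\<close>, so \<open>|C| - 1 \<le> \<Sum>n\<^sub>i - \<ell>\<close>.\<close>

definition hamming_distance :: "nat \<Rightarrow> 'a list \<Rightarrow> 'a list \<Rightarrow> nat" where
  "hamming_distance l x y = card {i. i < l \<and> x ! i \<noteq> y ! i}"

definition balanced :: "nat \<Rightarrow> 'a list set \<Rightarrow> bool" where
  "balanced l T \<longleftrightarrow> (\<forall>i<l. \<forall>a. even (card {x\<in>T. x ! i = a}))"

definition odd_value_counts :: "(nat \<times> 'a) set \<Rightarrow> 'a list set \<Rightarrow> (nat \<times> 'a) set" where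
  "odd_value_counts P E = {(i, a) \<in> P. odd (card {x\<in>E. x ! i = a})}"

lemma card_agreements_add_hamming_distance:
  "card {i. i < l \<and> x ! i = y ! i} + hamming_distance l x y = l"
proof -
  have "card {i. i < l \<and> x ! i = y ! i} + card {i. i < l \<and> x ! i \<noteq> y ! i}
      = card ({i. i < l \<and> x ! i = y ! i} \<union> {i. i < l \<and> x ! i \<noteq> y ! i})"
    by (rule card_Un_disjoint[symmetric]) auto
  also have "{i. i < l \<and> x ! i = y ! i} \<union> {i. i < l \<and> x ! i \<noteq> y ! i} = {..<l}"
    by auto
  finally show ?thesis
    by (simp add: hamming_distance_def)
qed

lemma sum_card_agreements:
  assumes "finite T"
  shows "(\<Sum>x\<in>T. card {i. i < l \<and> x ! i = y ! i}) = (\<Sum>i<l. card {x\<in>T. x ! i = y ! i})"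
  using sum.swap_restrict[OF assms finite_lessThan,
      where g = "\<lambda>_ _. 1::nat" and R = "\<lambda>x i. x ! i = y ! i"]
  by simp

lemma balanced_even_odd_distance_set_empty:
  assumes fin: "finite T" and odd_dist: "pairwise (\<lambda>x y. odd (hamming_distance l x y)) T"
    and even_T: "even (card T)" and bal: "balanced l T"
  shows "T = {}"
proof (rule ccontr)
  assume "T \<noteq> {}"
  then obtain y where y: "y \<in> T" by blast
  define agree where "agree x = card {i. i < l \<and> x ! i = y ! i}" for x
  have "even (\<Sum>x\<in>T. agree x)"
    unfolding agree_def sum_card_agreements[OF fin]
    using bal by (auto simp: balanced_def intro: dvd_sum)
  moreover have "(\<Sum>x\<in>T. agree x) = l + (\<Sum>x\<in>T - {y}. agree x)"
    using fin y by (simp add: sum.remove agree_def)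
  moreover have "odd (\<Sum>x\<in>T - {y}. agree x) \<longleftrightarrow> even l"
  proof -
    have "odd (agree x) \<longleftrightarrow> even l" if "x \<in> T - {y}" for x
      using odd_dist that y card_agreements_add_hamming_distance[of l x y]
      unfolding agree_def pairwise_def by (metis Diff_iff even_add insertI1)
    then have "{x\<in>T - {y}. odd (agree x)} = (if even l then T - {y} else {})"
      by auto
    moreover have "odd (card (T - {y}))"
      using fin y even_T \<open>T \<noteq> {}\<close> by (simp add: card_Diff_singleton card_gt_0_iff)
    ultimately show ?thesis
      using fin by (simp add: even_sum_iff)
  qed
  ultimately show False
    by simp
qed

lemma card_even_subsets:
  assumes fin: "finite C" and "C \<noteq> {}"
  shows "card {E. E \<subseteq> C \<and> even (card E)} = 2 ^ (card C - 1)"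
proof -
  obtain x0 where x0: "x0 \<in> C"
    using \<open>C \<noteq> {}\<close> by blast
  define complete where "complete S = (if even (card S) then S else insert x0 S)" for S
  have "bij_betw (\<lambda>E. E - {x0}) {E. E \<subseteq> C \<and> even (card E)} (Pow (C - {x0}))"
  proof (rule bij_betw_byWitness[where f' = complete])
    show "\<forall>E\<in>{E. E \<subseteq> C \<and> even (card E)}. complete (E - {x0}) = E"
    proof
      fix E assume E: "E \<in> {E. E \<subseteq> C \<and> even (card E)}"
      then have "finite E"
        using fin finite_subset by blast
      then show "complete (E - {x0}) = E"
        using E by (cases "x0 \<in> E") (auto simp: complete_def card_Diff_singleton card_gt_0_iff)
    qed
    show "\<forall>S\<in>Pow (C - {x0}). complete S - {x0} = S"
      by (auto simp: complete_def)
    show "(\<lambda>E. E - {x0}) ` {E. E \<subseteq> C \<and> even (card E)} \<subseteq> Pow (C - {x0})"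
      by auto
    show "complete ` Pow (C - {x0}) \<subseteq> {E. E \<subseteq> C \<and> even (card E)}"
    proof
      fix E assume "E \<in> complete ` Pow (C - {x0})"
      then obtain S where S: "S \<subseteq> C - {x0}" and E: "E = complete S"
        by blast
      have "finite S" "x0 \<notin> S"
        using S fin finite_subset by blast+
      then show "E \<in> {E. E \<subseteq> C \<and> even (card E)}"
        using S x0 by (auto simp: E complete_def)
    qed
  qed
  then have "card {E. E \<subseteq> C \<and> even (card E)} = card (Pow (C - {x0}))"
    by (rule bij_betw_same_card)
  also have "\<dots> = 2 ^ (card C - 1)"
    using fin x0 by (simp add: card_Pow card_Diff_singleton)
  finally show ?thesis .
qed

lemma even_card_sym_diff_iff:
  assumes "finite A" "finite B"
  shows "even (card (sym_diff A B)) \<longleftrightarrow> (even (card A) \<longleftrightarrow> even (card B))"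
proof -
  have "card (sym_diff A B) + card (A \<inter> B) = card (A \<union> B)"
    using assms by (subst card_Un_disjoint[symmetric]) (auto intro: arg_cong[where f = card])
  moreover have "card (A \<union> B) + card (A \<inter> B) = card A + card B"
    using assms by (rule card_Un_Int[symmetric])
  ultimately show ?thesis
    by presburger
qed

lemma balanced_if_nonzero_value_counts_even:
  fixes T :: "nat list set"
  assumes fin: "finite T" and even_T: "even (card T)"
    and bounded: "\<forall>x\<in>T. \<forall>i<l. x ! i < ns ! i"
    and nonzero: "\<And>i a. i < l \<Longrightarrow> 0 < a \<Longrightarrow> a < ns ! i \<Longrightarrow> even (card {x\<in>T. x ! i = a})"
  shows "balanced l T"
  unfolding balanced_def
proof (intro allI impI)
  fix i a assume i: "i < l"
  have nonzero_all: "even (card {x\<in>T. x ! i = a})" if "0 < a" for a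
  proof (cases "a < ns ! i")
    case False
    then have "{x\<in>T. x ! i = a} = {}"
      using bounded i by fastforce
    then show ?thesis
      by (simp only: card.empty even_zero)
  qed (use nonzero i that in blast)
  have "card {x\<in>T. x ! i \<noteq> 0} = (\<Sum>a\<in>{1..<ns ! i}. card {x\<in>{x\<in>T. x ! i \<noteq> 0}. x ! i = a})"
    using sum.group[of "{x\<in>T. x ! i \<noteq> 0}" "{1..<ns ! i}" "\<lambda>x. x ! i" "\<lambda>_. 1::nat"] fin bounded i
    by fastforce
  also have "\<dots> = (\<Sum>a\<in>{1..<ns ! i}. card {x\<in>T. x ! i = a})"
    by (intro sum.cong) (auto intro: arg_cong[where f = card])
  finally have "even (card {x\<in>T. x ! i \<noteq> 0})"
    using nonzero_all by (auto intro: dvd_sum)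
  moreover have "card {x\<in>T. x ! i = 0} + card {x\<in>T. x ! i \<noteq> 0} = card T"
    using fin by (subst card_Un_disjoint[symmetric]) (auto intro: arg_cong[where f = card])
  ultimately have "even (card {x\<in>T. x ! i = 0})"
    using even_T by presburger
  then show "even (card {x\<in>T. x ! i = a})"
    using nonzero_all by (cases "a = 0") auto
qed

lemma inj_on_odd_value_counts:
  fixes C :: "nat list set"
  assumes fin: "finite C" and bounded: "\<forall>x\<in>C. \<forall>i<l. x ! i < ns ! i"
    and odd_dist: "pairwise (\<lambda>x y. odd (hamming_distance l x y)) C"
  shows "inj_on (odd_value_counts (SIGMA i:{..<l}. {1..<ns ! i})) {E. E \<subseteq> C \<and> even (card E)}"
proof (rule inj_onI)
  fix E1 E2
  assume E1: "E1 \<in> {E. E \<subseteq> C \<and> even (card E)}" and E2: "E2 \<in> {E. E \<subseteq> C \<and> even (card E)}"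
    and same: "odd_value_counts (SIGMA i:{..<l}. {1..<ns ! i}) E1
      = odd_value_counts (SIGMA i:{..<l}. {1..<ns ! i}) E2"
  have fin12: "finite E1" "finite E2"
    using E1 E2 fin finite_subset by blast+
  have "sym_diff E1 E2 = {}"
  proof (rule balanced_even_odd_distance_set_empty)
    show "finite (sym_diff E1 E2)" "pairwise (\<lambda>x y. odd (hamming_distance l x y)) (sym_diff E1 E2)"
      using fin12 odd_dist E1 E2 by (auto intro: pairwise_subset)
    show "even (card (sym_diff E1 E2))"
      using E1 E2 fin12 by (simp add: even_card_sym_diff_iff)
    have "even (card (sym_diff {x\<in>E1. x ! i = a} {x\<in>E2. x ! i = a}))"
      if "i < l" "0 < a" "a < ns ! i" for i a
    proof -
      have "(i, a) \<in> odd_value_counts (SIGMA i:{..<l}. {1..<ns ! i}) E1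
          \<longleftrightarrow> (i, a) \<in> odd_value_counts (SIGMA i:{..<l}. {1..<ns ! i}) E2"
        by (simp only: same)
      then show ?thesis
        using that fin12 by (simp add: odd_value_counts_def even_card_sym_diff_iff)
    qed
    moreover have "{x\<in>sym_diff E1 E2. x ! i = a} = sym_diff {x\<in>E1. x ! i = a} {x\<in>E2. x ! i = a}"
      for i a by auto
    ultimately show "balanced l (sym_diff E1 E2)"
      using fin12 E1 E2 bounded
      by (intro balanced_if_nonzero_value_counts_even[where ns = ns]) (auto simp: even_card_sym_diff_iff)
  qed
  then show "E1 = E2"
    by blast
qed

lemma card_odd_distance_set_le:
  fixes C :: "nat list set"
  assumes fin: "finite C" and bounded: "\<forall>x\<in>C. \<forall>i<length ns. x ! i < ns ! i"
    and odd_dist: "pairwise (\<lambda>x y. odd (hamming_distance (length ns) x y)) C"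
  shows "card C \<le> sum_list ns - length ns + 1"
proof (cases "C = {}")
  case False
  define P where "P = (SIGMA i:{..<length ns}. {1..<ns ! i})"
  have finite_P: "finite P"
    by (simp add: P_def)
  have "2 ^ (card C - 1) = card {E. E \<subseteq> C \<and> even (card E)}"
    using fin False by (simp add: card_even_subsets)
  also have "\<dots> \<le> card (Pow P)"
    using inj_on_odd_value_counts[OF fin bounded odd_dist] finite_P
    by (intro card_inj_on_le) (auto simp: P_def odd_value_counts_def)
  also have "\<dots> = 2 ^ card P"
    using finite_P by (rule card_Pow)
  finally have "card C - 1 \<le> card P"
    by simp
  moreover have "card P = sum_list ns - length ns"
  proof -
    have positive: "\<forall>i<length ns. 1 \<le> ns ! i"
      using bounded False by fastforce
    have "card P = (\<Sum>i<length ns. ns ! i - 1)"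
      by (simp add: P_def)
    also have "\<dots> = (\<Sum>i<length ns. ns ! i) - (\<Sum>i<length ns. 1)"
      using positive by (intro sum_subtractf_nat) simp
    finally show ?thesis
      by (simp add: sum_list_sum_nth atLeast0LessThan)
  qed
  ultimately show ?thesis
    by simp
qed simp

lemma verts_xor_product_complete_graphs:
  "verts (xor_product (map complete_graph ns))
    = {x. length x = length ns \<and> (\<forall>i<length ns. x ! i < ns ! i)}"
  by (auto simp: xor_product_def verts_def complete_graph_def)

lemma adj_xor_product_complete_graphs:
  "adj (xor_product (map complete_graph ns)) x y \<longleftrightarrow> odd (hamming_distance (length ns) x y)"
proof -
  have "{i. i < length ns \<and> adj (map complete_graph ns ! i) (x ! i) (y ! i)}
      = {i. i < length ns \<and> x ! i \<noteq> y ! i}"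
    by (auto simp: adj_def complete_graph_def)
  then show ?thesis
    by (simp add: xor_product_def adj_def[of "(_, _)"] hamming_distance_def)
qed

lemma clique_number_le:
  assumes "\<And>C. finite C \<Longrightarrow> is_clique G C \<Longrightarrow> card C \<le> k"
  shows "clique_number G \<le> k"
proof -
  have "is_clique G {}"
    by (simp add: is_clique_def)
  then have "{card C | C. finite C \<and> is_clique G C} \<noteq> {}"
    by blast
  then show ?thesis
    unfolding clique_number_def by (rule cSup_least) (use assms in blast)
qed

theorem theorem3p1:
  fixes ns :: "nat list"
  assumes "length ns \<ge> 2"
    and "\<forall>n\<in>set ns. n > 0"
  shows "clique_number (xor_product (map complete_graph ns)) \<le> sum_list ns - length ns + 1"
proof (rule clique_number_le)
  fix C assume "finite C" and "is_clique (xor_product (map complete_graph ns)) C"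
  then show "card C \<le> sum_list ns - length ns + 1"
    by (intro card_odd_distance_set_le)
      (auto simp: is_clique_def pairwise_def verts_xor_product_complete_graphs
        adj_xor_product_complete_graphs)
qed

end
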